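(* Let $l$ and $r$ be positive integers with $l\geq 2r$, and let $f$ be a real function on the nonnegative integers with $f(n)=a_ln^l+a_{l-1}n^{l-1}+\cdots+a_{l-2r}n^{l-2r}+o(n^{l-2r})$ as $n\to\infty$, where $a_l,\ldots,a_{l-2r}$ are real constants and $a_l\neq 0$. Then for every $1\leq j\leq r$ there are real numbers $z_{3,j},\ldots,z_{2(r-j+1),j}$ such that $$\left(\mathcal R^2\widehat{\mathcal L}^{j-1}f\right)(n)=1+\frac{2^j-2^{j-1}l-2}{n^2}+\sum_{i=3}^{2(r-j+1)}\frac{z_{i,j}}{n^i}+o\!\left(\frac{1}{n^{2(r-j+1)}}\right)\quad(n\to\infty).$$
   Context: For a real function (sequence) $g$ on the nonnegative integers, $(\widehat{\mathcal L}g)(n)=g(n+1)^2-g(n)g(n+2)$, $\widehat{\mathcal L}^0 g=g$ and $\widehat{\mathcal L}^jg=\widehat{\mathcal L}(\widehat{\mathcal L}^{j-1}g)$; and $(\mathcal R^2g)(n)=\frac{g(n)g(n+2)}{g(n+1)^2}$ (defined for $n$ large enough that $g(n+1)\ne0$). *)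

theory Defs
  imports Complex_Main "HOL-Library.Landau_Symbols"
begin

definition Lhat :: "(nat \<Rightarrow> real) \<Rightarrow> nat \<Rightarrow> real" where
  "Lhat g n = g (n + 1) ^ 2 - g n * g (n + 2)"

definition R2 :: "(nat \<Rightarrow> real) \<Rightarrow> nat \<Rightarrow> real" where
  "R2 g n = g n * g (n + 2) / g (n + 1) ^ 2"

end

theory Submission
  imports Defs "HOL-Computational_Algebra.Polynomial"
begin

text \<open>
  Replace f by the polynomial P of degree l that it approximates. If g = P + o(n^(d - m)) with
  d = deg P, then Lhat g = Lhat P + o(n^(2d - m)), and Lhat P is a polynomial of degree 2d - 2
  with leading coefficient d lc(P)^2; so every application of Lhat keeps the relative precision
  o(n^(-m)) while lowering m by 2, and after j - 1 steps the degree is 2^(j-1) (l - 2) + 2.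
  For a polynomial P, R2 P = 1 - Lhat P(n) / P(n+1)^2, and n^2 Lhat P(n) / P(n+1)^2 is a rational
  function tending to d, hence has an expansion in powers of 1/n; this yields
  R2 P = 1 - d/n^2 + O(1/n^3). Finally R2 only sees relative errors, so passing from P back to
  the iterate of f costs o(n^(-m)).
\<close>

section \<open>Translates and differences of polynomials\<close>

definition translate_poly :: "'a::comm_semiring_1 \<Rightarrow> 'a poly \<Rightarrow> 'a poly" where
  "translate_poly c P = P \<circ>\<^sub>p [:c, 1:]"

definition fwd_diff_poly :: "'a::comm_ring_1 poly \<Rightarrow> 'a poly" where
  "fwd_diff_poly P = translate_poly 1 P - P"

definition Lhat_poly :: "'a::comm_ring_1 poly \<Rightarrow> 'a poly" where
  "Lhat_poly P = translate_poly 1 P ^ 2 - P * translate_poly 2 P"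

lemma poly_translate_poly [simp]: "poly (translate_poly c P) x = poly P (c + x)"
  by (simp add: translate_poly_def poly_pcompose)

lemma poly_fwd_diff_poly [simp]: "poly (fwd_diff_poly P) x = poly P (1 + x) - poly P x"
  by (simp add: fwd_diff_poly_def)

lemma poly_Lhat_poly [simp]:
  "poly (Lhat_poly P) x = poly P (1 + x) ^ 2 - poly P x * poly P (2 + x)"
  by (simp add: Lhat_poly_def)

lemma degree_translate_poly [simp]:
  fixes P :: "'a::{comm_semiring_1,semiring_no_zero_divisors} poly"
  shows "degree (translate_poly c P) = degree P"
  by (simp add: translate_poly_def degree_pcompose)

lemma coeff_translate_poly_top:
  fixes P :: "'a::{comm_semiring_1,semiring_no_zero_divisors} poly"
  assumes "degree P \<le> e"
  shows "coeff (translate_poly c P) e = coeff P e"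
proof (cases "degree P = e")
  case True
  then show ?thesis
    using lead_coeff_comp[of "[:c, 1:]" P] by (simp add: translate_poly_def degree_pcompose)
next
  case False
  then show ?thesis using assms by (simp add: coeff_eq_0)
qed

lemma coeff_translate_poly_degree [simp]:
  fixes P :: "'a::{comm_semiring_1,semiring_no_zero_divisors} poly"
  shows "coeff (translate_poly c P) (degree P) = lead_coeff P"
  by (simp add: coeff_translate_poly_top)

lemma translate_poly_eq_0_iff [simp]:
  fixes P :: "'a::{comm_semiring_1,semiring_no_zero_divisors} poly"
  shows "translate_poly c P = 0 \<longleftrightarrow> P = 0"
  by (metis coeff_translate_poly_degree degree_translate_poly leading_coeff_0_iff)

lemma fwd_diff_poly_pCons:
  fixes Q :: "'a::{idom,ring_char_0} poly"
  shows "fwd_diff_poly (pCons a Q) = translate_poly 1 Q + pCons 0 (fwd_diff_poly Q)"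
  by (rule poly_ext) (simp add: algebra_simps)

lemma fwd_diff_poly_top:
  fixes P :: "'a::{idom,ring_char_0} poly"
  assumes "degree P \<le> d"
  shows "degree (fwd_diff_poly P) \<le> d - 1 \<and> coeff (fwd_diff_poly P) (d - 1) = of_nat d * coeff P d"
  using assms
proof (induction P arbitrary: d)
  case 0
  then show ?case by (simp add: fwd_diff_poly_def translate_poly_def)
next
  case (pCons a Q)
  have dQ: "degree Q \<le> d - 1"
    using pCons.prems pCons.hyps by (cases "Q = 0") auto
  show ?case
  proof (cases d)
    case 0
    then have "Q = 0" using pCons.prems by (auto simp: degree_pCons_eq_if split: if_splits)
    then show ?thesis using 0 by (simp add: fwd_diff_poly_def translate_poly_def)
  next
    case (Suc e)
    have IH: "degree (fwd_diff_poly Q) \<le> e - 1 \<and> coeff (fwd_diff_poly Q) (e - 1) = of_nat e * coeff Q e"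
      using pCons.IH[of e] dQ Suc by simp
    have T: "degree (translate_poly 1 Q) \<le> e" "coeff (translate_poly 1 Q) e = coeff Q e"
      using coeff_translate_poly_top[of Q e 1] dQ Suc by simp_all
    show ?thesis
    proof (cases e)
      case 0
      then have "lead_coeff (fwd_diff_poly Q) = 0" using IH by simp
      then have "fwd_diff_poly Q = 0" by simp
      then show ?thesis using T Suc 0 by (simp add: fwd_diff_poly_pCons)
    next
      case (Suc e')
      have "degree (pCons 0 (fwd_diff_poly Q)) \<le> e"
        using IH Suc by (cases "fwd_diff_poly Q = 0") auto
      then show ?thesis using T IH Suc \<open>d = Suc e\<close>
        by (simp add: fwd_diff_poly_pCons degree_add_le algebra_simps)
    qed
  qed
qed

lemma coeff_mult_degree_bounds:
  fixes p q :: "'a::comm_semiring_0 poly"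
  assumes "degree p \<le> a" "degree q \<le> b"
  shows "coeff (p * q) (a + b) = coeff p a * coeff q b"
proof (cases "degree p = a \<and> degree q = b")
  case True
  then show ?thesis using coeff_mult_degree_sum[of p q] by simp
next
  case False
  then have "degree (p * q) < a + b" using assms degree_mult_le[of p q] by auto
  moreover have "coeff p a = 0 \<or> coeff q b = 0" using False assms by (auto intro!: coeff_eq_0)
  ultimately show ?thesis by (auto simp: coeff_eq_0)
qed

lemma Lhat_poly_fwd_diff:
  fixes P :: "'a::{idom,ring_char_0} poly"
  shows "Lhat_poly P = fwd_diff_poly P * translate_poly 1 (fwd_diff_poly P)
     - translate_poly 1 P * fwd_diff_poly (fwd_diff_poly P)"
  by (rule poly_ext) (simp add: algebra_simps power2_eq_square)

lemma Lhat_poly_top: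
  fixes P :: "'a::{idom,ring_char_0} poly"
  assumes "degree P = d" "d \<ge> 2"
  shows "degree (Lhat_poly P) = 2 * d - 2" "coeff (Lhat_poly P) (2 * d - 2) = of_nat d * lead_coeff P ^ 2"
proof -
  let ?D = "fwd_diff_poly P"
  let ?D2 = "fwd_diff_poly (fwd_diff_poly P)"
  have D1: "degree ?D \<le> d - 1" "coeff ?D (d - 1) = of_nat d * lead_coeff P"
    using fwd_diff_poly_top[of P d] assms by auto
  have D2: "degree ?D2 \<le> d - 2" "coeff ?D2 (d - 2) = of_nat (d - 1) * (of_nat d * lead_coeff P)"
    using fwd_diff_poly_top[OF D1(1)] D1 by (auto simp: diff_diff_add numeral_2_eq_2)
  have split: "2 * d - 2 = (d - 1) + (d - 1)" "2 * d - 2 = d + (d - 2)" using assms by simp_all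
  have T1: "degree (?D * translate_poly 1 ?D) \<le> 2 * d - 2"
    "coeff (?D * translate_poly 1 ?D) (2 * d - 2) = (of_nat d * lead_coeff P) ^ 2"
    unfolding split(1)
    using degree_mult_le[of ?D "translate_poly 1 ?D"] D1
      coeff_mult_degree_bounds[of ?D "d - 1" "translate_poly 1 ?D" "d - 1"]
    by (simp_all add: coeff_translate_poly_top power2_eq_square)
  have T2: "degree (translate_poly 1 P * ?D2) \<le> 2 * d - 2"
    "coeff (translate_poly 1 P * ?D2) (2 * d - 2) = lead_coeff P * (of_nat (d - 1) * (of_nat d * lead_coeff P))"
    unfolding split(2)
    using degree_mult_le[of "translate_poly 1 P" ?D2] D2 assms
      coeff_mult_degree_bounds[of "translate_poly 1 P" d ?D2 "d - 2"]
    by (simp_all add: coeff_translate_poly_top)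
  have le: "degree (Lhat_poly P) \<le> 2 * d - 2"
    unfolding Lhat_poly_fwd_diff using T1 T2 by (intro degree_diff_le) auto
  show c: "coeff (Lhat_poly P) (2 * d - 2) = of_nat d * lead_coeff P ^ 2"
    unfolding Lhat_poly_fwd_diff using T1 T2 assms
    by (simp add: power2_eq_square of_nat_diff algebra_simps)
  have "lead_coeff P \<noteq> 0" using assms by auto
  then have "2 * d - 2 \<le> degree (Lhat_poly P)" using c assms by (intro le_degree) simp
  then show "degree (Lhat_poly P) = 2 * d - 2" using le by simp
qed

section \<open>Polynomials along the natural numbers\<close>

lemma tendsto_poly_div_power:
  fixes p :: "real poly"
  assumes "degree p \<le> k"
  shows "((\<lambda>n. poly p (real n) / real n ^ k) \<longlongrightarrow> coeff p k) sequentially"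
proof -
  have poly_sum: "poly p x = (\<Sum>i\<le>k. coeff p i * x ^ i)" for x
    unfolding poly_altdef
    by (rule sum.mono_neutral_left) (use assms in \<open>auto simp: coeff_eq_0\<close>)
  have "eventually (\<lambda>n. (\<Sum>i\<le>k. coeff p i * (1 / real n) ^ (k - i)) = poly p (real n) / real n ^ k)
          sequentially"
    using eventually_gt_at_top[of "0::nat"]
  proof eventually_elim
    case (elim n)
    have "coeff p i * real n ^ i / real n ^ k = coeff p i * (1 / real n) ^ (k - i)" if "i \<le> k" for i
    proof -
      have "real n ^ k = real n ^ i * real n ^ (k - i)"
        using that by (simp add: power_add[symmetric])
      then show ?thesis using elim by (simp add: power_one_over field_simps)
    qed
    then show ?case by (simp add: poly_sum sum_divide_distrib)
  qed
  moreover have "((\<lambda>n. \<Sum>i\<le>k. coeff p i * (1 / real n) ^ (k - i))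
                   \<longlongrightarrow> (\<Sum>i\<le>k. coeff p i * 0 ^ (k - i))) sequentially"
    by (intro tendsto_intros lim_inverse_n')
  moreover have "(\<Sum>i\<le>k. coeff p i * (0::real) ^ (k - i)) = coeff p k"
    by (subst sum.mono_neutral_right[of "{..k}" "{k}"]) auto
  ultimately show ?thesis by (simp add: tendsto_cong)
qed

lemma poly_bigo_power:
  fixes p :: "real poly"
  assumes "degree p \<le> k"
  shows "(\<lambda>n. poly p (real n)) \<in> O(\<lambda>n. real n ^ k)"
  by (rule bigoI_tendsto[OF tendsto_poly_div_power[OF assms]])
     (use eventually_gt_at_top[of "0::nat"] in \<open>eventually_elim, simp\<close>)

lemma eventually_poly_nonzero:
  fixes p :: "real poly"
  assumes "p \<noteq> 0"
  shows "eventually (\<lambda>n. poly p (real n) \<noteq> 0) sequentially"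
proof -
  have "eventually (\<lambda>n. poly p (real n) / real n ^ degree p \<noteq> 0) sequentially"
    by (rule tendsto_imp_eventually_ne[OF tendsto_poly_div_power[OF order.refl]])
       (use assms in simp)
  then show ?thesis by eventually_elim auto
qed

lemma tendsto_poly_ratio:
  fixes A B :: "real poly"
  assumes "B \<noteq> 0" "degree A \<le> degree B"
  shows "((\<lambda>n. poly A (real n) / poly B (real n)) \<longlongrightarrow> coeff A (degree B) / lead_coeff B)
           sequentially"
proof -
  have "((\<lambda>n. (poly A (real n) / real n ^ degree B) / (poly B (real n) / real n ^ degree B))
          \<longlongrightarrow> coeff A (degree B) / lead_coeff B) sequentially"
    by (intro tendsto_divide tendsto_poly_div_power assms order.refl) (use assms in simp)
  moreover have "eventually (\<lambda>n. (poly A (real n) / real n ^ degree B) / (poly B (real n) / real n ^ degree B)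
                   = poly A (real n) / poly B (real n)) sequentially"
    using eventually_gt_at_top[of "0::nat"] by eventually_elim simp
  ultimately show ?thesis by (rule Lim_transform_eventually)
qed

lemma inverse_poly_bigo:
  fixes p :: "real poly"
  assumes "p \<noteq> 0"
  shows "(\<lambda>n. 1 / poly p (real n)) \<in> O(\<lambda>n. 1 / real n ^ degree p)"
proof (rule bigoI_tendsto)
  have "((\<lambda>n. inverse (poly p (real n) / real n ^ degree p)) \<longlongrightarrow> inverse (lead_coeff p)) sequentially"
    by (intro tendsto_inverse tendsto_poly_div_power order.refl) (use assms in simp)
  then show "((\<lambda>n. 1 / poly p (real n) / (1 / real n ^ degree p)) \<longlongrightarrow> inverse (lead_coeff p)) sequentially"
    by (simp add: field_simps)
  show "eventually (\<lambda>n. 1 / real n ^ degree p \<noteq> 0) sequentially"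
    using eventually_gt_at_top[of "0::nat"] by eventually_elim simp
qed

lemma smallo_power_shift:
  assumes "e \<in> o(\<lambda>n. real n ^ k)"
  shows "(\<lambda>n. e (n + c)) \<in> o(\<lambda>n. real n ^ k)"
proof -
  have "(\<lambda>n. e (n + c)) \<in> o(\<lambda>n. real (n + c) ^ k)"
    by (rule landau_o.small.compose[OF assms filterlim_add_const_nat_at_top])
  moreover have "(\<lambda>n. poly ([:real c, 1:] ^ k) (real n)) \<in> O(\<lambda>n. real n ^ k)"
    by (rule poly_bigo_power) (simp add: degree_linear_power)
  ultimately show ?thesis by (simp add: landau_o.small_big_trans algebra_simps)
qed

lemma smallo_mult_convergent:
  assumes "f \<in> o(h)" "(k \<longlongrightarrow> L) sequentially"
  shows "(\<lambda>n. k n * f n) \<in> o(h)"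
proof -
  have "k \<in> O(\<lambda>_. 1)"
    by (rule bigoI_tendsto[of _ _ L]) (use assms(2) in simp_all)
  from landau_o.big_small_mult[OF this assms(1)] show ?thesis by simp
qed

lemma smallo_inverse_power_tendsto_0:
  assumes "f \<in> o(\<lambda>n. 1 / real n ^ m)"
  shows "(f \<longlongrightarrow> 0) sequentially"
proof -
  have "(\<lambda>n. 1 / real n ^ m) \<in> O(\<lambda>_. 1)"
  proof (rule bigoI_tendsto)
    have "((\<lambda>n. (1 / real n) ^ m) \<longlongrightarrow> 0 ^ m) sequentially"
      by (intro tendsto_intros lim_inverse_n')
    then show "((\<lambda>n. 1 / real n ^ m / 1) \<longlongrightarrow> 0 ^ m) sequentially" by (simp add: power_one_over)
  qed simp
  from smalloD_tendsto[OF landau_o.small_big_trans[OF assms this]] show ?thesis by simp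
qed

lemma degree_pCons_0_remainder_le:
  fixes A B :: "'a::field poly"
  assumes "B \<noteq> 0" "degree A \<le> degree B"
  shows "degree (pCons 0 (A - smult (coeff A (degree B) / lead_coeff B) B)) \<le> degree B"
proof (cases "A - smult (coeff A (degree B) / lead_coeff B) B = 0")
  case False
  let ?C = "A - smult (coeff A (degree B) / lead_coeff B) B"
  have "degree ?C \<le> degree B"
    using assms by (intro degree_diff_le) auto
  moreover have "coeff ?C (degree B) = 0"
    using assms(1) by simp
  ultimately have "degree ?C < degree B"
    using False by (metis leading_coeff_0_iff order.not_eq_order_implies_strict)
  then show ?thesis using False by simp
qed simp

lemma expansion_divide_power:
  assumes "(\<lambda>n. F n - (\<Sum>i\<le>k. w i / real n ^ i)) \<in> o(\<lambda>n. 1 / real n ^ k)"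
  shows "(\<lambda>n. F n / real n ^ j - (\<Sum>i = j..k + j. w (i - j) / real n ^ i)) \<in> o(\<lambda>n. 1 / real n ^ (k + j))"
proof -
  have "(\<lambda>n. 1 / real n ^ j * (F n - (\<Sum>i\<le>k. w i / real n ^ i))) \<in> o(\<lambda>n. 1 / real n ^ j * (1 / real n ^ k))"
    by (rule landau_o.big_small_mult[OF landau_o.big_refl assms])
  moreover have "(\<Sum>i = j..k + j. w (i - j) / x ^ i) = (\<Sum>i\<le>k. w i / x ^ i) / x ^ j" for x :: real
  proof -
    have "(\<Sum>i = 0 + j..k + j. w (i - j) / x ^ i) = (\<Sum>i = 0..k. w i / x ^ (i + j))"
      using sum.shift_bounds_cl_nat_ivl[of "\<lambda>i. w (i - j) / x ^ i" 0 j k] by simp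
    also have "\<dots> = (\<Sum>i\<le>k. w i / x ^ i) / x ^ j"
      by (simp add: atMost_atLeast0 sum_divide_distrib power_add mult.commute)
    finally show ?thesis by simp
  qed
  ultimately show ?thesis by (simp add: power_add diff_divide_distrib mult.commute)
qed

lemma poly_ratio_expansion:
  fixes A B :: "real poly"
  assumes "B \<noteq> 0" "degree A \<le> degree B"
  shows "\<exists>w. w 0 = coeff A (degree B) / lead_coeff B \<and>
    (\<lambda>n. poly A (real n) / poly B (real n) - (\<Sum>i\<le>m. w i / real n ^ i)) \<in> o(\<lambda>n. 1 / real n ^ m)"
  using assms(2)
proof (induction m arbitrary: A)
  case 0
  let ?z = "coeff A (degree B) / lead_coeff B"
  have "((\<lambda>n. poly A (real n) / poly B (real n) - ?z) \<longlongrightarrow> ?z - ?z) sequentially"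
    by (intro tendsto_intros tendsto_poly_ratio assms(1) 0)
  then have "(\<lambda>n. poly A (real n) / poly B (real n) - ?z) \<in> o(\<lambda>n. 1)"
    by (intro smalloI_tendsto) auto
  then show ?case by (intro exI[of _ "\<lambda>_. ?z"]) simp
next
  case (Suc m)
  \<comment> \<open>A/B = z + (A'/B)/n, and A' again has degree at most deg B.\<close>
  define z where "z = coeff A (degree B) / lead_coeff B"
  define A' where "A' = pCons 0 (A - smult z B)"
  have "degree A' \<le> degree B"
    unfolding A'_def z_def using assms(1) Suc.prems by (rule degree_pCons_0_remainder_le)
  then obtain w' where w': "(\<lambda>n. poly A' (real n) / poly B (real n) - (\<Sum>i\<le>m. w' i / real n ^ i))
                              \<in> o(\<lambda>n. 1 / real n ^ m)"
    using Suc.IH by blast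
  define w where "w i = (if i = 0 then z else w' (i - 1))" for i
  have "(\<lambda>n. poly A' (real n) / poly B (real n) / real n ^ 1 - (\<Sum>i = 1..m + 1. w' (i - 1) / real n ^ i))
          \<in> o(\<lambda>n. 1 / real n ^ (m + 1))"
    by (rule expansion_divide_power[OF w'])
  moreover have "eventually (\<lambda>n. poly A' (real n) / poly B (real n) / real n ^ 1
                     - (\<Sum>i = 1..m + 1. w' (i - 1) / real n ^ i)
     = poly A (real n) / poly B (real n) - (\<Sum>i\<le>Suc m. w i / real n ^ i)) sequentially"
    using eventually_gt_at_top[of "0::nat"] eventually_poly_nonzero[OF assms(1)]
  proof eventually_elim
    case (elim n)
    have "(\<Sum>i\<le>Suc m. w i / real n ^ i) = z + (\<Sum>i = 1..m + 1. w' (i - 1) / real n ^ i)"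
      unfolding atMost_atLeast0 by (subst sum.atLeast_Suc_atMost) (simp_all add: w_def)
    moreover have "poly A' (real n) / poly B (real n) / real n = poly A (real n) / poly B (real n) - z"
      using elim by (simp add: A'_def field_simps)
    ultimately show ?case by simp
  qed
  ultimately have "(\<lambda>n. poly A (real n) / poly B (real n) - (\<Sum>i\<le>Suc m. w i / real n ^ i))
                     \<in> o(\<lambda>n. 1 / real n ^ Suc m)"
    by (simp add: landau_o.small.in_cong)
  then show ?case by (intro exI[of _ w]) (simp add: w_def z_def)
qed

section \<open>The operators near a polynomial\<close>

lemma R2_eq_one_minus_Lhat:
  assumes "g (n + 1) \<noteq> 0"
  shows "R2 g n = 1 - Lhat g n / g (n + 1) ^ 2"
  using assms by (simp add: R2_def Lhat_def field_simps)

lemma Lhat_poly_eq: "Lhat (\<lambda>n. poly P (real n)) n = poly (Lhat_poly P) (real n)"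
  by (simp add: Lhat_def add.commute)

lemma tendsto_R2_poly:
  fixes P :: "real poly"
  assumes "P \<noteq> 0"
  shows "(R2 (\<lambda>n. poly P (real n)) \<longlongrightarrow> 1) sequentially"
proof -
  have deg: "degree (translate_poly 1 P ^ 2) = degree P + degree P"
    using assms by (simp add: degree_power_eq)
  have "((\<lambda>n. poly (P * translate_poly 2 P) (real n) / poly (translate_poly 1 P ^ 2) (real n)) \<longlongrightarrow>
      coeff (P * translate_poly 2 P) (degree (translate_poly 1 P ^ 2)) / lead_coeff (translate_poly 1 P ^ 2))
      sequentially"
    using assms degree_mult_le[of P "translate_poly 2 P"] by (intro tendsto_poly_ratio) (simp_all add: deg)
  moreover have "coeff (P * translate_poly 2 P) (degree (translate_poly 1 P ^ 2))
                   / lead_coeff (translate_poly 1 P ^ 2) = 1"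
  proof -
    have lc: "lead_coeff (translate_poly 1 P ^ 2) = lead_coeff P ^ 2"
      by (simp only: lead_coeff_power) simp
    have "coeff (P * translate_poly 2 P) (degree (translate_poly 1 P ^ 2)) = lead_coeff P ^ 2"
      unfolding deg using coeff_mult_degree_bounds[of P "degree P" "translate_poly 2 P" "degree P"]
      by (simp add: power2_eq_square)
    then show ?thesis unfolding lc using assms by simp
  qed
  ultimately show ?thesis by (simp add: R2_def[abs_def] add.commute)
qed

lemma Lhat_poly_ratio_expansion:
  fixes P :: "real poly"
  assumes dP: "degree P = d" and "d \<ge> 2"
  shows "\<exists>w. w 0 = real d \<and> (\<lambda>n. real n ^ 2 * poly (Lhat_poly P) (real n) / poly P (real n + 1) ^ 2
           - (\<Sum>i\<le>k. w i / real n ^ i)) \<in> o(\<lambda>n. 1 / real n ^ k)"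
proof -
  have P0: "P \<noteq> 0" using assms by auto
  define A where "A = monom 1 2 * Lhat_poly P"
  define B where "B = translate_poly 1 P ^ 2"
  have B0: "B \<noteq> 0" and dB: "degree B = 2 * d"
    using P0 dP by (auto simp: B_def degree_power_eq)
  have lB: "lead_coeff B = lead_coeff P ^ 2"
    unfolding B_def lead_coeff_power by simp
  have L: "degree (Lhat_poly P) = 2 * d - 2" "coeff (Lhat_poly P) (2 * d - 2) = real d * lead_coeff P ^ 2"
    using Lhat_poly_top[OF assms] by simp_all
  have "2 * d = 2 * d - 2 + 2" using assms by simp
  then have dA: "degree A \<le> degree B" and cA: "coeff A (degree B) = real d * lead_coeff P ^ 2"
    using L degree_mult_le[of "monom 1 2" "Lhat_poly P"] dB
    by (auto simp: A_def coeff_monom_mult degree_monom_eq)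
  obtain w where "w 0 = coeff A (degree B) / lead_coeff B"
    and w: "(\<lambda>n. poly A (real n) / poly B (real n) - (\<Sum>i\<le>k. w i / real n ^ i)) \<in> o(\<lambda>n. 1 / real n ^ k)"
    using poly_ratio_expansion[OF B0 dA] by blast
  moreover have "coeff A (degree B) / lead_coeff B = real d" using cA lB P0 by simp
  moreover have "poly A (real n) / poly B (real n) = real n ^ 2 * poly (Lhat_poly P) (real n) / poly P (real n + 1) ^ 2"
    for n by (simp add: A_def B_def poly_monom add.commute)
  ultimately show ?thesis by (intro exI[of _ w]) simp
qed

lemma R2_poly_expansion:
  fixes P :: "real poly"
  assumes dP: "degree P = d" and "d \<ge> 2" and "m \<ge> 2"
  shows "\<exists>z. (\<lambda>n. R2 (\<lambda>n. poly P (real n)) n - (1 - real d / real n ^ 2 + (\<Sum>i = 3..m. z i / real n ^ i)))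
           \<in> o(\<lambda>n. 1 / real n ^ m)"
proof -
  obtain k where m: "m = k + 2" using \<open>m \<ge> 2\<close> by (metis add.commute le_Suc_ex)
  have P0: "translate_poly 1 P \<noteq> 0" using assms by auto
  define F where "F n = real n ^ 2 * poly (Lhat_poly P) (real n) / poly P (real n + 1) ^ 2" for n
  obtain w where w0: "w 0 = real d" and w: "(\<lambda>n. F n - (\<Sum>i\<le>k. w i / real n ^ i)) \<in> o(\<lambda>n. 1 / real n ^ k)"
    using Lhat_poly_ratio_expansion[OF assms(1,2)] unfolding F_def by blast
  have expansion: "(\<lambda>n. - (F n / real n ^ 2 - (\<Sum>i = 2..m. w (i - 2) / real n ^ i))) \<in> o(\<lambda>n. 1 / real n ^ m)"
    using expansion_divide_power[OF w, of 2] unfolding m landau_o.small.uminus_in_iff .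
  have ev: "eventually (\<lambda>n. - (F n / real n ^ 2 - (\<Sum>i = 2..m. w (i - 2) / real n ^ i))
     = R2 (\<lambda>n. poly P (real n)) n - (1 - real d / real n ^ 2 + (\<Sum>i = 3..m. - w (i - 2) / real n ^ i)))
     sequentially"
    using eventually_gt_at_top[of "0::nat"] eventually_poly_nonzero[OF P0]
  proof eventually_elim
    case (elim n)
    have "(\<Sum>i = 2..m. w (i - 2) / real n ^ i) = real d / real n ^ 2 + (\<Sum>i = 3..m. w (i - 2) / real n ^ i)"
      using \<open>m \<ge> 2\<close> w0 by (subst sum.atLeast_Suc_atMost) (simp_all add: numeral_3_eq_3 numeral_2_eq_2)
    moreover have "R2 (\<lambda>n. poly P (real n)) n = 1 - F n / real n ^ 2"
      using elim by (simp add: R2_eq_one_minus_Lhat Lhat_poly_eq F_def add.commute)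
    ultimately show ?case by (simp add: sum_negf)
  qed
  have "(\<lambda>n. R2 (\<lambda>n. poly P (real n)) n
      - (1 - real d / real n ^ 2 + (\<Sum>i = 3..m. - w (i - 2) / real n ^ i))) \<in> o(\<lambda>n. 1 / real n ^ m)"
    using expansion unfolding landau_o.small.in_cong[OF ev] .
  then show ?thesis by (rule exI[of _ "\<lambda>i. - w (i - 2)"])
qed

lemma smallo_relative_error:
  fixes P :: "real poly"
  assumes "P \<noteq> 0" "m \<le> degree P" "e \<in> o(\<lambda>n. real n ^ (degree P - m))"
  shows "(\<lambda>n. e (n + k) / poly P (real n + real k)) \<in> o(\<lambda>n. 1 / real n ^ m)"
proof -
  have "(\<lambda>n. e (n + k) * (1 / poly (translate_poly (real k) P) (real n)))
          \<in> o(\<lambda>n. real n ^ (degree P - m) * (1 / real n ^ degree P))"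
    using landau_o.small_big_mult[OF smallo_power_shift[OF assms(3), of k]
        inverse_poly_bigo[of "translate_poly (real k) P"]] assms(1) by simp
  also have "(\<lambda>n. real n ^ (degree P - m) * (1 / real n ^ degree P)) \<in> \<Theta>(\<lambda>n. 1 / real n ^ m)"
  proof (rule bigthetaI_cong)
    show "eventually (\<lambda>n. real n ^ (degree P - m) * (1 / real n ^ degree P) = 1 / real n ^ m) sequentially"
      using eventually_gt_at_top[of "0::nat"]
    proof eventually_elim
      case (elim n)
      have "real n ^ degree P = real n ^ (degree P - m) * real n ^ m"
        using assms(2) by (simp add: power_add[symmetric])
      then show ?case using elim by simp
    qed
  qed
  finally show ?thesis by (simp add: add.commute)
qed

lemma R2_relative_perturbation:
  fixes g h :: "nat \<Rightarrow> real"
  assumes "g n = h n * (1 + a)" "g (n + 1) = h (n + 1) * (1 + b)" "g (n + 2) = h (n + 2) * (1 + c)"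
    and "1 + b \<noteq> 0"
  shows "R2 g n - R2 h n = R2 h n * (1 / (1 + b) ^ 2) * (a + c + c * a - 2 * b - b * b)"
proof -
  have "R2 g n - R2 h n = R2 h n * ((1 + a) * (1 + c) / (1 + b) ^ 2 - 1)"
    unfolding R2_def assms(1-3) by (simp add: power_mult_distrib right_diff_distrib)
  also have "(1 + a) * (1 + c) / (1 + b) ^ 2 - 1 = 1 / (1 + b) ^ 2 * (a + c + c * a - 2 * b - b * b)"
    using assms(4) by (simp add: divide_simps) (simp add: algebra_simps power2_eq_square)
  finally show ?thesis by simp
qed

lemma R2_smallo_perturbation:
  fixes P :: "real poly" and g :: "nat \<Rightarrow> real"
  assumes P0: "P \<noteq> 0" and m: "m \<le> degree P"
    and g: "(\<lambda>n. g n - poly P (real n)) \<in> o(\<lambda>n. real n ^ (degree P - m))"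
  shows "(\<lambda>n. R2 g n - R2 (\<lambda>n. poly P (real n)) n) \<in> o(\<lambda>n. 1 / real n ^ m)"
proof -
  define \<epsilon> where "\<epsilon> k n = (g (n + k) - poly P (real (n + k))) / poly P (real n + real k)" for k n
  have \<epsilon>_smallo: "\<epsilon> k \<in> o(\<lambda>n. 1 / real n ^ m)" for k
    unfolding \<epsilon>_def[abs_def] using smallo_relative_error[OF P0 m g] by simp
  have \<epsilon>_lim: "(\<epsilon> k \<longlongrightarrow> 0) sequentially" for k
    by (rule smallo_inverse_power_tendsto_0[OF \<epsilon>_smallo])
  define N where "N n = \<epsilon> 0 n + \<epsilon> 2 n + \<epsilon> 2 n * \<epsilon> 0 n - 2 * \<epsilon> 1 n - \<epsilon> 1 n * \<epsilon> 1 n" for n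
  have "N \<in> o(\<lambda>n. 1 / real n ^ m)"
    unfolding N_def[abs_def]
    by (intro sum_in_smallo \<epsilon>_smallo smallo_mult_convergent[OF \<epsilon>_smallo \<epsilon>_lim]
        landau_o.small.cmult_in_iff[THEN iffD2]) auto
  moreover have "((\<lambda>n. R2 (\<lambda>n. poly P (real n)) n * (1 / (1 + \<epsilon> 1 n) ^ 2)) \<longlongrightarrow> 1 * (1 / (1 + 0) ^ 2))
                   sequentially"
    by (intro tendsto_intros tendsto_R2_poly P0 \<epsilon>_lim) simp
  ultimately have KN: "(\<lambda>n. R2 (\<lambda>n. poly P (real n)) n * (1 / (1 + \<epsilon> 1 n) ^ 2) * N n)
                         \<in> o(\<lambda>n. 1 / real n ^ m)"
    by (rule smallo_mult_convergent)
  have ev: "eventually (\<lambda>n. R2 (\<lambda>n. poly P (real n)) n * (1 / (1 + \<epsilon> 1 n) ^ 2) * N n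
                     = R2 g n - R2 (\<lambda>n. poly P (real n)) n) sequentially"
  proof -
    have nz: "eventually (\<lambda>n. poly (translate_poly (real k) P) (real n) \<noteq> 0) sequentially" for k
      using P0 by (intro eventually_poly_nonzero) simp
    have "eventually (\<lambda>n. \<epsilon> 1 n > -1) sequentially"
      using \<epsilon>_lim[of 1] by (rule order_tendstoD) simp
    with nz[of 0] nz[of 1] nz[of 2] show ?thesis
    proof eventually_elim
      case (elim n)
      have "g (n + k) = poly P (real (n + k)) * (1 + \<epsilon> k n)" if "poly P (real n + real k) \<noteq> 0" for k
        using that by (simp add: \<epsilon>_def field_simps)
      from this[of 0] this[of 1] this[of 2] elim
      have "R2 g n - R2 (\<lambda>n. poly P (real n)) n
              = R2 (\<lambda>n. poly P (real n)) n * (1 / (1 + \<epsilon> 1 n) ^ 2) * N n"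
        unfolding N_def by (intro R2_relative_perturbation) (auto simp: add.commute)
      then show ?case by simp
    qed
  qed
  show ?thesis using landau_o.small.in_cong[OF ev] KN by blast
qed

lemma R2_expansion_of_poly_approx:
  fixes P :: "real poly" and g :: "nat \<Rightarrow> real"
  assumes "degree P = d" "2 \<le> m" "m \<le> d" "(\<lambda>n. g n - poly P (real n)) \<in> o(\<lambda>n. real n ^ (d - m))"
  shows "\<exists>z. (\<lambda>n. R2 g n - (1 - real d / real n ^ 2 + (\<Sum>i = 3..m. z i / real n ^ i)))
           \<in> o(\<lambda>n. 1 / real n ^ m)"
proof -
  obtain z where z: "(\<lambda>n. R2 (\<lambda>n. poly P (real n)) n - (1 - real d / real n ^ 2 + (\<Sum>i = 3..m. z i / real n ^ i)))
                       \<in> o(\<lambda>n. 1 / real n ^ m)"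
    using R2_poly_expansion[OF assms(1) _ assms(2)] assms(2,3) by auto
  have "P \<noteq> 0" "m \<le> degree P" "(\<lambda>n. g n - poly P (real n)) \<in> o(\<lambda>n. real n ^ (degree P - m))"
    using assms by auto
  from sum_in_smallo(1)[OF R2_smallo_perturbation[OF this] z] show ?thesis
    by (intro exI[of _ z]) (simp add: algebra_simps)
qed

lemma Lhat_smallo_perturbation:
  fixes P :: "real poly" and g :: "nat \<Rightarrow> real"
  assumes "degree P = d" "e \<le> d" "(\<lambda>n. g n - poly P (real n)) \<in> o(\<lambda>n. real n ^ e)"
  shows "(\<lambda>n. Lhat g n - poly (Lhat_poly P) (real n)) \<in> o(\<lambda>n. real n ^ (d + e))"
proof -
  define \<delta> where "\<delta> n = g n - poly P (real n)" for n
  have \<delta>_small: "(\<lambda>n. \<delta> (n + k)) \<in> o(\<lambda>n. real n ^ e)" for k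
    using smallo_power_shift assms(3) unfolding \<delta>_def[abs_def] by blast
  have "(\<lambda>n. real n ^ e) \<in> O(\<lambda>n. real n ^ d)"
    using poly_bigo_power[of "monom 1 e" d] assms(2) by (simp add: poly_monom degree_monom_eq)
  then have \<delta>_big: "(\<lambda>n. \<delta> (n + k)) \<in> O(\<lambda>n. real n ^ d)" for k
    using \<delta>_small landau_o.small_big_trans landau_o.small_imp_big by blast
  have P_big: "(\<lambda>n. poly P (real n + real k)) \<in> O(\<lambda>n. real n ^ d)" for k
    using poly_bigo_power[of "translate_poly (real k) P" d] assms(1) by (simp add: add.commute)
  have power: "(\<lambda>n. real n ^ d * real n ^ e) = (\<lambda>n. real n ^ (d + e))"
    by (simp add: power_add)
  have P\<delta>: "(\<lambda>n. poly P (real n + real k) * \<delta> (n + j)) \<in> o(\<lambda>n. real n ^ (d + e))" for k j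
    using landau_o.big_small_mult[OF P_big \<delta>_small] unfolding power .
  have \<delta>\<delta>: "(\<lambda>n. \<delta> (n + k) * \<delta> (n + j)) \<in> o(\<lambda>n. real n ^ (d + e))" for k j
    using landau_o.big_small_mult[OF \<delta>_big \<delta>_small] unfolding power .
  have "(\<lambda>n. 2 * (poly P (real n + real 1) * \<delta> (n + 1)) + \<delta> (n + 1) * \<delta> (n + 1)
       - poly P (real n + real 0) * \<delta> (n + 2) - poly P (real n + real 2) * \<delta> (n + 0)
       - \<delta> (n + 0) * \<delta> (n + 2)) \<in> o(\<lambda>n. real n ^ (d + e))"
    by (intro sum_in_smallo P\<delta> \<delta>\<delta> landau_o.small.cmult_in_iff[THEN iffD2]) auto
  moreover have "(\<lambda>n. 2 * (poly P (real n + real 1) * \<delta> (n + 1)) + \<delta> (n + 1) * \<delta> (n + 1)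
       - poly P (real n + real 0) * \<delta> (n + 2) - poly P (real n + real 2) * \<delta> (n + 0)
       - \<delta> (n + 0) * \<delta> (n + 2)) = (\<lambda>n. Lhat g n - poly (Lhat_poly P) (real n))"
    by (simp add: fun_eq_iff Lhat_def \<delta>_def power2_eq_square algebra_simps)
  ultimately show ?thesis by simp
qed

lemma Lhat_iterate_poly_approx:
  fixes f :: "nat \<Rightarrow> real" and P :: "real poly"
  assumes "2 * r \<le> l" "2 \<le> l" "degree P = l"
    and "(\<lambda>n. f n - poly P (real n)) \<in> o(\<lambda>n. real n ^ (l - 2 * r))"
  shows "t \<le> r \<Longrightarrow> \<exists>Q. degree Q = 2 ^ t * (l - 2) + 2 \<and>
    (\<lambda>n. (Lhat ^^ t) f n - poly Q (real n)) \<in> o(\<lambda>n. real n ^ (2 ^ t * (l - 2) + 2 - 2 * (r - t)))"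
proof (induction t)
  case 0
  have "l - 2 + 2 = l" using assms(2) by simp
  then show ?case using assms(3,4) by (intro exI[of _ P]) simp
next
  case (Suc t)
  define d where "d = 2 ^ t * (l - 2) + 2"
  obtain Q where Q: "degree Q = d"
    and approx: "(\<lambda>n. (Lhat ^^ t) f n - poly Q (real n)) \<in> o(\<lambda>n. real n ^ (d - 2 * (r - t)))"
    using Suc unfolding d_def by auto
  have "l - 2 \<le> 2 ^ t * (l - 2)" by simp
  then have "l \<le> d" using assms(2) unfolding d_def by linarith
  then have "d + (d - 2 * (r - t)) = 2 ^ Suc t * (l - 2) + 2 - 2 * (r - Suc t)"
    using Suc.prems assms(1) by (simp add: d_def)
  moreover have "degree (Lhat_poly Q) = 2 ^ Suc t * (l - 2) + 2"
    using Lhat_poly_top(1)[OF Q] by (simp add: d_def)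
  ultimately show ?case
    using Lhat_smallo_perturbation[OF Q _ approx] by (intro exI[of _ "Lhat_poly Q"]) simp
qed

lemma R2_Lhat_iterate_expansion:
  fixes f :: "nat \<Rightarrow> real" and P :: "real poly"
  assumes "2 * r \<le> l" "2 \<le> l" "degree P = l"
    and "(\<lambda>n. f n - poly P (real n)) \<in> o(\<lambda>n. real n ^ (l - 2 * r))" and "t < r"
  shows "\<exists>z. (\<lambda>n. R2 ((Lhat ^^ t) f) n
                 - (1 - real (2 ^ t * (l - 2) + 2) / real n ^ 2 + (\<Sum>i = 3..2 * (r - t). z i / real n ^ i)))
           \<in> o(\<lambda>n. 1 / real n ^ (2 * (r - t)))"
proof -
  define d where "d = 2 ^ t * (l - 2) + 2"
  obtain Q where Q: "degree Q = d"
    and approx: "(\<lambda>n. (Lhat ^^ t) f n - poly Q (real n)) \<in> o(\<lambda>n. real n ^ (d - 2 * (r - t)))"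
    using Lhat_iterate_poly_approx[OF assms(1-4) less_imp_le[OF assms(5)]] unfolding d_def by blast
  have "l - 2 \<le> 2 ^ t * (l - 2)" by simp
  then have "l \<le> d" using assms(2) unfolding d_def by linarith
  then have "2 \<le> 2 * (r - t)" "2 * (r - t) \<le> d" using assms(1,5) by auto
  from R2_expansion_of_poly_approx[OF Q this approx] show ?thesis unfolding d_def .
qed

lemma degree_poly_sum_monom:
  fixes a :: "nat \<Rightarrow> 'a::comm_semiring_1"
  assumes "a l \<noteq> 0" "i \<le> l"
  shows "degree (\<Sum>k = i..l. monom (a k) k) = l"
    and "poly (\<Sum>k = i..l. monom (a k) k) x = (\<Sum>k = i..l. a k * x ^ k)"
proof -
  have coeff: "coeff (\<Sum>k = i..l. monom (a k) k) j = (if j \<in> {i..l} then a j else 0)" for j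
    by (simp add: coeff_sum coeff_monom)
  show "degree (\<Sum>k = i..l. monom (a k) k) = l"
    using assms by (intro antisym degree_le le_degree) (auto simp: coeff)
  show "poly (\<Sum>k = i..l. monom (a k) k) x = (\<Sum>k = i..l. a k * x ^ k)"
    by (simp add: poly_sum poly_monom)
qed

theorem theorem4p5:
  fixes l r :: nat and f :: "nat \<Rightarrow> real" and a :: "nat \<Rightarrow> real"
  assumes "r \<ge> 1" and "l \<ge> 2 * r" and "a l \<noteq> 0"
    and "(\<lambda>n. f n - (\<Sum>k = l - 2 * r..l. a k * real n ^ k)) \<in> o(\<lambda>n. real n ^ (l - 2 * r))"
  shows "\<forall>j \<in> {1..r}. \<exists>z :: nat \<Rightarrow> real.
    (\<lambda>n. R2 ((Lhat ^^ (j - 1)) f) n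
        - (1 + (2 ^ j - 2 ^ (j - 1) * real l - 2) / real n ^ 2
             + (\<Sum>i = 3..2 * (r - j + 1). z i / real n ^ i)))
      \<in> o(\<lambda>n. 1 / real n ^ (2 * (r - j + 1)))"
proof
  fix j assume "j \<in> {1..r}"
  then obtain t where t: "j = Suc t" "t < r" by (cases j) auto
  define P where "P = (\<Sum>k = l - 2 * r..l. monom (a k) k)"
  have "degree P = l" "(\<lambda>n. f n - poly P (real n)) \<in> o(\<lambda>n. real n ^ (l - 2 * r))"
    using degree_poly_sum_monom[of a l "l - 2 * r"] assms(3,4) by (simp_all add: P_def)
  moreover have "2 \<le> l" using assms(1,2) by simp
  ultimately obtain z where z: "(\<lambda>n. R2 ((Lhat ^^ t) f) n
      - (1 - real (2 ^ t * (l - 2) + 2) / real n ^ 2 + (\<Sum>i = 3..2 * (r - t). z i / real n ^ i)))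
        \<in> o(\<lambda>n. 1 / real n ^ (2 * (r - t)))"
    using R2_Lhat_iterate_expansion[OF assms(2)] t(2) by blast
  have d: "real (2 ^ t * (l - 2) + 2) = - (2 ^ j - 2 ^ t * real l - 2)"
    using \<open>2 \<le> l\<close> t by (simp add: of_nat_diff algebra_simps)
  have jt: "j - 1 = t" "r - j + 1 = r - t" using t by auto
  show "\<exists>z. (\<lambda>n. R2 ((Lhat ^^ (j - 1)) f) n
        - (1 + (2 ^ j - 2 ^ (j - 1) * real l - 2) / real n ^ 2
             + (\<Sum>i = 3..2 * (r - j + 1). z i / real n ^ i)))
      \<in> o(\<lambda>n. 1 / real n ^ (2 * (r - j + 1)))"
    using z unfolding jt d minus_divide_left[symmetric] diff_minus_eq_add by blast
qed

end
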